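(* Let $p\in[1,\infty)$, $w$ a weight sequence, and let $A\subset L_{p,w}$ be bounded in $\|\cdot\|_{p,w}$ and equinormed with respect to $\{\|\cdot\|_{p,w,i}\}_{i\in\mathbb{N}}$. Then $$\forall\varepsilon>0\ \exists N\in\mathbb{N}\ \forall a\in A\ \forall i\ge N:\ \sum_{j=i+1}^\infty|a_{\sigma^a_j}|^p w_j<\varepsilon.$$
   Context: A weight sequence is a sequence $w=(w_i)$ of positive reals with $w_1=1\ge w_2\ge\dots$, $w_i\to0$, and $\sum_i w_i=+\infty$. For a real sequence $a$, $\|a\|_{p,w}=\sup_{\sigma}\big(\sum_{i=1}^\infty |a_{\sigma_i}|^p w_i\big)^{1/p}$ over all permutations $\sigma$ of $\mathbb{N}$; $L_{p,w}$ is the set of real sequences with finite norm. $\|a\|_{p,w,i}=\|(a_1,\dots,a_i,0,0,\dots)\|_{p,w}$. $A$ is equinormed if $\forall\varepsilon>0\ \exists i\ \forall a\in A:\ \|a\|_{p,w}\le\|a\|_{p,w,i}+\varepsilon$. For $a\in L_{p,w}$, $\sigma^a:\mathbb{N}\to\mathbb{N}$ is defined recursively: $\sigma^a_i$ is the element $j$ of $\mathbb{N}\setminus\{\sigma^a_1,\dots,\sigma^a_{i-1}\}$ with $|a_j|$ maximal, taking the smallest such index in case of ties (well defined for $a\in L_{p,w}$; $|a_{\sigma^a_i}|$ is nonincreasing). *)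

theory Defs
  imports "HOL-Analysis.Analysis"
begin

text \<open>Sequences are indexed by nat starting at 0 (paper index i corresponds to i-1 here).\<close>

definition weight_seq :: "(nat \<Rightarrow> real) \<Rightarrow> bool" where
  "weight_seq w \<longleftrightarrow> (\<forall>i. w i > 0) \<and> w 0 = 1 \<and> decseq w \<and> w \<longlonglongrightarrow> 0
     \<and> \<not> summable w"

definition perm_sum :: "real \<Rightarrow> (nat \<Rightarrow> real) \<Rightarrow> (nat \<Rightarrow> real) \<Rightarrow> (nat \<Rightarrow> nat) \<Rightarrow> real" where
  "perm_sum p w a \<sigma> = (\<Sum>i. \<bar>a (\<sigma> i)\<bar> powr p * w i)"

definition Lpw :: "real \<Rightarrow> (nat \<Rightarrow> real) \<Rightarrow> (nat \<Rightarrow> real) set" where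
  "Lpw p w = {a. (\<forall>\<sigma>. bij \<sigma> \<longrightarrow> summable (\<lambda>i. \<bar>a (\<sigma> i)\<bar> powr p * w i))
      \<and> (\<exists>B. \<forall>\<sigma>. bij \<sigma> \<longrightarrow> perm_sum p w a \<sigma> \<le> B)}"

definition pw_norm :: "real \<Rightarrow> (nat \<Rightarrow> real) \<Rightarrow> (nat \<Rightarrow> real) \<Rightarrow> real" where
  "pw_norm p w a = (SUP \<sigma>\<in>{\<sigma>. bij \<sigma>}. perm_sum p w a \<sigma>) powr (1 / p)"

definition trunc_seq :: "nat \<Rightarrow> (nat \<Rightarrow> real) \<Rightarrow> (nat \<Rightarrow> real)" where
  "trunc_seq i a = (\<lambda>j. if j < i then a j else 0)"

definition pw_norm_i :: "real \<Rightarrow> (nat \<Rightarrow> real) \<Rightarrow> nat \<Rightarrow> (nat \<Rightarrow> real) \<Rightarrow> real" where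
  "pw_norm_i p w i a = pw_norm p w (trunc_seq i a)"

definition equinormed :: "real \<Rightarrow> (nat \<Rightarrow> real) \<Rightarrow> (nat \<Rightarrow> real) set \<Rightarrow> bool" where
  "equinormed p w A \<longleftrightarrow>
     (\<forall>\<epsilon>>0. \<exists>i. \<forall>a\<in>A. pw_norm p w a \<le> pw_norm_i p w i a + \<epsilon>)"

text \<open>The decreasing rearrangement sigma^a: the list of its first n values.\<close>
primrec sigma_list :: "(nat \<Rightarrow> real) \<Rightarrow> nat \<Rightarrow> nat list" where
  "sigma_list a 0 = []"
| "sigma_list a (Suc n) = sigma_list a n @
     [LEAST j. j \<notin> set (sigma_list a n) \<and>
        (\<forall>k. k \<notin> set (sigma_list a n) \<longrightarrow> \<bar>a k\<bar> \<le> \<bar>a j\<bar>)]"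

definition sigma_seq :: "(nat \<Rightarrow> real) \<Rightarrow> nat \<Rightarrow> nat" where
  "sigma_seq a i = sigma_list a (Suc i) ! i"

end

theory Submission
  imports Defs
begin

text \<open>Let \<open>S(a) = \<parallel>a\<parallel>\<^sup>p\<close> be the supremum of the permuted weighted sums. Summing along the
  decreasing rearrangement \<open>\<sigma>\<^sup>a\<close> gives at most \<open>S(a)\<close>, while for the truncation \<open>a|k\<close> the
  greedy choice of \<open>\<sigma>\<^sup>a\<close> dominates every permutation in partial sums, so Abel summation against
  the decreasing weights yields \<open>S(a|k) \<le> \<Sum>\<^sub>j\<^sub><\<^sub>k |a(\<sigma>\<^sup>a\<^sub>j)|\<^sup>p w\<^sub>j\<close>. Hence every tail
  beyond \<open>i \<ge> k\<close> of the \<open>\<sigma>\<^sup>a\<close>-sum is at most \<open>S(a) - S(a|k)\<close>. Equinormedness makes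
  \<open>\<parallel>a\<parallel> - \<parallel>a|k\<parallel>\<close> uniformly small on \<open>A\<close>, and uniform continuity of \<open>t \<mapsto> t\<^sup>p\<close> on the bounded
  range of the norms transfers this to \<open>S(a) - S(a|k)\<close>.\<close>

lemma inj_on_lessThan_extends_to_bij:
  fixes f :: "nat \<Rightarrow> nat"
  assumes "inj_on f {..<n}"
  obtains \<pi> where "bij \<pi>" "\<And>j. j < n \<Longrightarrow> \<pi> j = f j"
proof -
  let ?F = "f ` {..<n}" and ?e = "enumerate (- f ` {..<n})"
  have "infinite (- ?F)"
    by (simp add: Compl_eq_Diff_UNIV Diff_infinite_finite)
  then have "bij_betw ?e UNIV (- ?F)" by (rule bij_enumerate)
  moreover have "bij_betw (\<lambda>j. j - n) {n..} UNIV"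
    by (rule bij_betw_byWitness[where f' = "\<lambda>j. j + n"]) auto
  ultimately have "bij_betw (\<lambda>j. ?e (j - n)) {n..} (- ?F)"
    using bij_betw_trans by (fastforce simp: comp_def)
  with assms have "bij_betw (\<lambda>j. if j \<in> {..<n} then f j else ?e (j - n)) ({..<n} \<union> {n..}) (?F \<union> - ?F)"
    by (intro bij_betw_disjoint_Un) (auto simp: bij_betw_def)
  moreover have "{..<n} \<union> {n..} = UNIV" by auto
  ultimately show ?thesis
    by (intro that[of "\<lambda>j. if j \<in> {..<n} then f j else ?e (j - n)"]) auto
qed

lemma sum_mult_by_parts:
  fixes u w :: "nat \<Rightarrow> 'a::comm_ring"
  shows "(\<Sum>m<k. u m * w m) =
    (\<Sum>l<k. u l) * w k + (\<Sum>m<k. (\<Sum>l<Suc m. u l) * (w m - w (Suc m)))"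
  by (induction k) (auto simp: algebra_simps)

lemma sum_mult_decseq_le_by_partial_sums:
  fixes u v w :: "nat \<Rightarrow> real"
  assumes "decseq w" "\<And>m. 0 \<le> w m" "\<And>m. m \<le> k \<Longrightarrow> (\<Sum>l<m. u l) \<le> (\<Sum>l<m. v l)"
  shows "(\<Sum>m<k. u m * w m) \<le> (\<Sum>m<k. v m * w m)"
proof -
  have "(\<Sum>l<k. u l) * w k \<le> (\<Sum>l<k. v l) * w k"
    using assms by (simp add: mult_right_mono)
  moreover have "(\<Sum>m<k. (\<Sum>l<Suc m. u l) * (w m - w (Suc m))) \<le>
      (\<Sum>m<k. (\<Sum>l<Suc m. v l) * (w m - w (Suc m)))"
  proof (rule sum_mono)
    fix m assume "m \<in> {..<k}"
    then show "(\<Sum>l<Suc m. u l) * (w m - w (Suc m)) \<le> (\<Sum>l<Suc m. v l) * (w m - w (Suc m))"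
      using assms(1) assms(3)[of "Suc m"] by (intro mult_right_mono) (auto simp: decseq_Suc_iff)
  qed
  ultimately show ?thesis
    unfolding sum_mult_by_parts[of u w k] sum_mult_by_parts[of v w k] by linarith
qed

definition finite_superlevels :: "(nat \<Rightarrow> real) \<Rightarrow> bool" where
  "finite_superlevels a \<longleftrightarrow> (\<forall>c>0. finite {k. c \<le> \<bar>a k\<bar>})"

lemma finite_superlevels_ex_max_outside:
  assumes "finite_superlevels a" "finite F"
  shows "\<exists>j. j \<notin> F \<and> (\<forall>k. k \<notin> F \<longrightarrow> \<bar>a k\<bar> \<le> \<bar>a j\<bar>)"
proof (cases "\<forall>k. k \<notin> F \<longrightarrow> a k = 0")
  case True
  obtain j where "j \<notin> F" using ex_new_if_finite[OF infinite_UNIV_nat assms(2)] by blast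
  with True show ?thesis by auto
next
  case False
  then obtain k0 where k0: "k0 \<notin> F" "a k0 \<noteq> 0" by auto
  define S where "S = {k. \<bar>a k0\<bar> \<le> \<bar>a k\<bar>} - F"
  have "finite S" "k0 \<in> S"
    using assms(1) k0 by (auto simp: finite_superlevels_def S_def)
  then have "Max ((\<lambda>k. \<bar>a k\<bar>) ` S) \<in> (\<lambda>k. \<bar>a k\<bar>) ` S" by (intro Max_in) auto
  then obtain j where j: "j \<in> S" "\<bar>a j\<bar> = Max ((\<lambda>k. \<bar>a k\<bar>) ` S)" by auto
  have max: "\<bar>a k\<bar> \<le> \<bar>a j\<bar>" if "k \<in> S" for k
    using j(2) \<open>finite S\<close> that by simp
  have "\<bar>a k\<bar> \<le> \<bar>a j\<bar>" if "k \<notin> F" for k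
    using max[of k] max[OF \<open>k0 \<in> S\<close>] that by (force simp: S_def)
  with j(1) show ?thesis
    by (auto simp: S_def)
qed

lemma length_sigma_list [simp]: "length (sigma_list a n) = n"
  by (induction n) auto

lemma nth_sigma_list: "l < n \<Longrightarrow> sigma_list a n ! l = sigma_seq a l"
proof (induction n)
  case (Suc n)
  then show ?case
    by (cases "l < n") (auto simp: nth_append sigma_seq_def less_Suc_eq)
qed simp

lemma set_sigma_list: "set (sigma_list a n) = sigma_seq a ` {..<n}"
  by (force simp: set_conv_nth nth_sigma_list)

lemma sigma_seq_greedy:
  assumes "finite_superlevels a"
  shows "sigma_seq a n \<notin> sigma_seq a ` {..<n}"
    and "k \<notin> sigma_seq a ` {..<n} \<Longrightarrow> \<bar>a k\<bar> \<le> \<bar>a (sigma_seq a n)\<bar>"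
proof -
  let ?F = "set (sigma_list a n)"
  let ?P = "\<lambda>j. j \<notin> ?F \<and> (\<forall>k. k \<notin> ?F \<longrightarrow> \<bar>a k\<bar> \<le> \<bar>a j\<bar>)"
  have "sigma_seq a n = (LEAST j. ?P j)"
    unfolding sigma_seq_def by (simp add: nth_append)
  also have "?P (LEAST j. ?P j)"
    by (rule LeastI_ex, rule finite_superlevels_ex_max_outside[OF assms]) simp
  finally have "?P (sigma_seq a n)" .
  then show "sigma_seq a n \<notin> sigma_seq a ` {..<n}"
    and "k \<notin> sigma_seq a ` {..<n} \<Longrightarrow> \<bar>a k\<bar> \<le> \<bar>a (sigma_seq a n)\<bar>"
    unfolding set_sigma_list by blast+
qed

lemma inj_sigma_seq:
  assumes "finite_superlevels a"
  shows "inj (sigma_seq a)"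
proof (rule injI)
  fix x y assume "sigma_seq a x = sigma_seq a y"
  then show "x = y"
    using sigma_seq_greedy(1)[OF assms, of x] sigma_seq_greedy(1)[OF assms, of y]
    by (metis imageI lessThan_iff linorder_neqE_nat)
qed

lemma sigma_seq_abs_antimono:
  assumes "finite_superlevels a" "l \<le> m"
  shows "\<bar>a (sigma_seq a m)\<bar> \<le> \<bar>a (sigma_seq a l)\<bar>"
proof -
  have "sigma_seq a m \<notin> sigma_seq a ` {..<l}"
    using inj_sigma_seq[OF assms(1)] assms(2) by (auto simp: inj_eq)
  then show ?thesis by (rule sigma_seq_greedy(2)[OF assms(1)])
qed

lemma sum_powr_le_sum_sigma_seq:
  assumes a: "finite_superlevels a" and p: "0 \<le> p" and J: "finite J" "card J \<le> r"
  shows "(\<Sum>x\<in>J. \<bar>a x\<bar> powr p) \<le> (\<Sum>l<r. \<bar>a (sigma_seq a l)\<bar> powr p)"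
proof -
  define f where "f x = \<bar>a x\<bar> powr p" for x
  define G where "G = sigma_seq a ` {..<r}"
  define c where "c = f (sigma_seq a (r - 1))"
  have inj: "inj_on (sigma_seq a) {..<r}"
    using inj_sigma_seq[OF a] by (rule inj_on_subset) simp
  have "finite G" "card G = r"
    using inj by (simp_all add: G_def card_image)
  have outside: "f x \<le> c" if "x \<notin> G" for x
  proof -
    have "x \<notin> sigma_seq a ` {..<r - 1}" using that by (auto simp: G_def)
    then show ?thesis
      unfolding c_def f_def using sigma_seq_greedy(2)[OF a] p by (simp add: powr_mono2)
  qed
  have inside: "c \<le> f y" if "y \<in> G" for y
    using that sigma_seq_abs_antimono[OF a, of _ "r - 1"] p
    by (auto simp: G_def c_def f_def intro!: powr_mono2)
  have "card (J - G) \<le> card (G - J)"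
    using card_Int_Diff[OF J(1), of G] card_Int_Diff[OF \<open>finite G\<close>, of J] J(2) \<open>card G = r\<close>
    by (simp add: Int_commute)
  have "sum f (J - G) \<le> of_nat (card (J - G)) * c"
    using outside by (intro sum_bounded_above) auto
  also have "\<dots> \<le> of_nat (card (G - J)) * c"
    using \<open>card (J - G) \<le> card (G - J)\<close> by (intro mult_right_mono) (auto simp: c_def f_def)
  also have "\<dots> \<le> sum f (G - J)"
    using inside by (intro sum_bounded_below) auto
  finally have "sum f J \<le> sum f G"
    using sum.Int_Diff[OF J(1), of f G] sum.Int_Diff[OF \<open>finite G\<close>, of f J]
    by (simp add: Int_commute)
  then show ?thesis
    using inj by (simp add: G_def f_def sum.reindex)
qed

definition perm_sum_sup :: "real \<Rightarrow> (nat \<Rightarrow> real) \<Rightarrow> (nat \<Rightarrow> real) \<Rightarrow> real" where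
  "perm_sum_sup p w a = (SUP \<sigma>\<in>{\<sigma>. bij \<sigma>}. perm_sum p w a \<sigma>)"

lemma pw_norm_eq_perm_sum_sup: "pw_norm p w a = perm_sum_sup p w a powr (1 / p)"
  by (simp add: pw_norm_def perm_sum_sup_def)

lemma perm_sum_le_perm_sum_sup:
  assumes "a \<in> Lpw p w" "bij \<sigma>"
  shows "perm_sum p w a \<sigma> \<le> perm_sum_sup p w a"
proof -
  obtain B where "\<forall>\<sigma>. bij \<sigma> \<longrightarrow> perm_sum p w a \<sigma> \<le> B"
    using assms(1) by (auto simp: Lpw_def)
  then have "bdd_above (perm_sum p w a ` {\<sigma>. bij \<sigma>})"
    by (auto intro!: bdd_aboveI2)
  with assms(2) show ?thesis
    unfolding perm_sum_sup_def by (intro cSUP_upper) auto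
qed

lemma perm_sum_sup_nonneg:
  assumes "a \<in> Lpw p w" "\<And>i. 0 \<le> w i"
  shows "0 \<le> perm_sum_sup p w a"
proof -
  have "summable (\<lambda>i. \<bar>a i\<bar> powr p * w i)"
    using assms(1) bij_id by (fastforce simp: Lpw_def)
  then have "0 \<le> perm_sum p w a id"
    unfolding perm_sum_def using assms(2) by (simp add: suminf_nonneg)
  also have "\<dots> \<le> perm_sum_sup p w a"
    using assms(1) bij_id by (rule perm_sum_le_perm_sum_sup)
  finally show ?thesis .
qed

lemma sum_inj_le_perm_sum_sup:
  assumes a: "a \<in> Lpw p w" and w: "\<And>i. 0 \<le> w i" and f: "inj_on f {..<n}"
  shows "(\<Sum>j<n. \<bar>a (f j)\<bar> powr p * w j) \<le> perm_sum_sup p w a"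
proof -
  obtain \<pi> where \<pi>: "bij \<pi>" "\<And>j. j < n \<Longrightarrow> \<pi> j = f j"
    using inj_on_lessThan_extends_to_bij[OF f] by blast
  have "summable (\<lambda>i. \<bar>a (\<pi> i)\<bar> powr p * w i)"
    using a \<pi>(1) by (auto simp: Lpw_def)
  then have "(\<Sum>j<n. \<bar>a (\<pi> j)\<bar> powr p * w j) \<le> perm_sum p w a \<pi>"
    unfolding perm_sum_def using w by (intro sum_le_suminf) auto
  also have "\<dots> \<le> perm_sum_sup p w a"
    using a \<pi>(1) by (rule perm_sum_le_perm_sum_sup)
  finally show ?thesis
    using \<pi>(2) by simp
qed

lemma weight_seq_nonneg: "weight_seq w \<Longrightarrow> 0 \<le> w i"
  by (simp add: weight_seq_def less_imp_le)

text \<open>Otherwise the infinitely many entries with \<open>\<bar>a k\<bar> \<ge> c\<close>, permuted to the front, would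
  bound \<open>c\<^sup>p \<Sum> w\<close>, contradicting the divergence of \<open>\<Sum> w\<close>.\<close>
lemma Lpw_finite_superlevels:
  assumes w: "weight_seq w" and p: "0 \<le> p" and a: "a \<in> Lpw p w"
  shows "finite_superlevels a"
  unfolding finite_superlevels_def
proof (intro allI impI, rule ccontr)
  fix c :: real
  assume c: "0 < c" and "infinite {k. c \<le> \<bar>a k\<bar>}"
  define e where "e = enumerate {k. c \<le> \<bar>a k\<bar>}"
  have e: "c \<le> \<bar>a (e i)\<bar>" "inj e" for i
    using enumerate_in_set[OF \<open>infinite _\<close>] strict_mono_imp_inj_on[OF strict_mono_enumerate]
      \<open>infinite _\<close> by (auto simp: e_def)
  have w0: "\<And>i. 0 \<le> w i"
    using w by (rule weight_seq_nonneg)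
  have "(\<Sum>i<n. w i) \<le> perm_sum_sup p w a / c powr p" for n
  proof -
    have "c powr p * (\<Sum>i<n. w i) \<le> (\<Sum>i<n. \<bar>a (e i)\<bar> powr p * w i)"
      unfolding sum_distrib_left
      using e(1) c p w0 by (intro sum_mono mult_right_mono powr_mono2) auto
    also have "\<dots> \<le> perm_sum_sup p w a"
      using e(2) by (intro sum_inj_le_perm_sum_sup[OF a w0]) (simp add: inj_on_subset[of _ UNIV])
    finally show ?thesis
      using c by (simp add: field_simps)
  qed
  then have "summable w"
    using w0 by (intro summableI_nonneg_bounded) auto
  with w show False
    by (simp add: weight_seq_def)
qed

lemma sigma_seq_sum_le_perm_sum_sup:
  assumes w: "weight_seq w" and p: "0 \<le> p" and a: "a \<in> Lpw p w"
  shows "summable (\<lambda>j. \<bar>a (sigma_seq a j)\<bar> powr p * w j)"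
    and "(\<Sum>j. \<bar>a (sigma_seq a j)\<bar> powr p * w j) \<le> perm_sum_sup p w a"
proof -
  have w0: "\<And>i. 0 \<le> w i"
    using w by (rule weight_seq_nonneg)
  have "inj (sigma_seq a)"
    by (rule inj_sigma_seq[OF Lpw_finite_superlevels[OF w p a]])
  then have partial: "(\<Sum>j<n. \<bar>a (sigma_seq a j)\<bar> powr p * w j) \<le> perm_sum_sup p w a" for n
    by (intro sum_inj_le_perm_sum_sup[OF a w0]) (simp add: inj_on_subset[of _ UNIV])
  show "summable (\<lambda>j. \<bar>a (sigma_seq a j)\<bar> powr p * w j)"
    using w0 partial by (intro summableI_nonneg_bounded) auto
  then show "(\<Sum>j. \<bar>a (sigma_seq a j)\<bar> powr p * w j) \<le> perm_sum_sup p w a"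
    using partial by (rule suminf_le_const)
qed

lemma perm_sum_trunc_seq_le:
  assumes a: "a \<in> Lpw p w" and w: "\<And>i. 0 \<le> w i" and \<sigma>: "bij \<sigma>"
  shows "summable (\<lambda>i. \<bar>trunc_seq k a (\<sigma> i)\<bar> powr p * w i)"
    and "perm_sum p w (trunc_seq k a) \<sigma> \<le> perm_sum p w a \<sigma>"
proof -
  have le: "\<bar>trunc_seq k a (\<sigma> i)\<bar> powr p * w i \<le> \<bar>a (\<sigma> i)\<bar> powr p * w i" for i
    using w[of i] by (intro mult_right_mono) (simp_all add: trunc_seq_def)
  have sm_a: "summable (\<lambda>i. \<bar>a (\<sigma> i)\<bar> powr p * w i)"
    using a \<sigma> by (auto simp: Lpw_def)
  then show sm: "summable (\<lambda>i. \<bar>trunc_seq k a (\<sigma> i)\<bar> powr p * w i)"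
    by (rule summable_comparison_test'[where N = 0]) (use le w in simp)
  show "perm_sum p w (trunc_seq k a) \<sigma> \<le> perm_sum p w a \<sigma>"
    unfolding perm_sum_def using le sm sm_a by (rule suminf_le)
qed

lemma trunc_seq_in_Lpw:
  assumes "a \<in> Lpw p w" "\<And>i. 0 \<le> w i"
  shows "trunc_seq k a \<in> Lpw p w"
proof -
  obtain B where B: "\<And>\<sigma>. bij \<sigma> \<Longrightarrow> perm_sum p w a \<sigma> \<le> B"
    using assms(1) by (auto simp: Lpw_def)
  show ?thesis
    unfolding Lpw_def
  proof (intro CollectI conjI allI impI exI[of _ B])
    fix \<sigma> :: "nat \<Rightarrow> nat" assume "bij \<sigma>"
    show "summable (\<lambda>i. \<bar>trunc_seq k a (\<sigma> i)\<bar> powr p * w i)"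
      by (rule perm_sum_trunc_seq_le(1)[OF assms \<open>bij \<sigma>\<close>])
    show "perm_sum p w (trunc_seq k a) \<sigma> \<le> B"
      using perm_sum_trunc_seq_le(2)[OF assms \<open>bij \<sigma>\<close>, of k] B[OF \<open>bij \<sigma>\<close>] by linarith
  qed
qed

lemma perm_sum_sup_trunc_seq_le:
  assumes "a \<in> Lpw p w" "\<And>i. 0 \<le> w i"
  shows "perm_sum_sup p w (trunc_seq k a) \<le> perm_sum_sup p w a"
  unfolding perm_sum_sup_def[of p w "trunc_seq k a"]
proof (rule cSUP_least)
  show "{\<sigma>. bij \<sigma>} \<noteq> ({} :: (nat \<Rightarrow> nat) set)"
    using bij_id by blast
  fix \<sigma> :: "nat \<Rightarrow> nat" assume "\<sigma> \<in> {\<sigma>. bij \<sigma>}"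
  then have "bij \<sigma>" by simp
  then show "perm_sum p w (trunc_seq k a) \<sigma> \<le> perm_sum_sup p w a"
    using perm_sum_trunc_seq_le(2)[OF assms] perm_sum_le_perm_sum_sup[OF assms(1)]
    by (meson order_trans)
qed

lemma sum_trunc_seq_perm_le_sum_sigma_seq:
  assumes a: "finite_superlevels a" and p: "0 \<le> p"
    and w: "decseq w" "\<And>i. 0 \<le> w i" and \<pi>: "inj \<pi>"
  shows "(\<Sum>i<n. \<bar>trunc_seq k a (\<pi> i)\<bar> powr p * w i) \<le> (\<Sum>m<k. \<bar>a (sigma_seq a m)\<bar> powr p * w m)"
proof -
  define u where "u i = \<bar>trunc_seq k a (\<pi> i)\<bar> powr p" for i
  define v where "v m = (if m < k then \<bar>a (sigma_seq a m)\<bar> powr p else 0)" for m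
  have sum_v: "(\<Sum>l<m. v l) = (\<Sum>l<min m k. \<bar>a (sigma_seq a l)\<bar> powr p)" for m
  proof -
    have "(\<Sum>l<m. v l) = (\<Sum>l\<in>{..<m} \<inter> {..<k}. \<bar>a (sigma_seq a l)\<bar> powr p)"
      unfolding v_def by (simp add: sum.inter_restrict)
    also have "{..<m} \<inter> {..<k} = {..<min m k}" by auto
    finally show ?thesis .
  qed
  have partial: "(\<Sum>l<m. u l) \<le> (\<Sum>l<m. v l)" for m
  proof -
    let ?J = "\<pi> ` {..<m} \<inter> {..<k}"
    have "(\<Sum>l<m. u l) = (\<Sum>x\<in>\<pi> ` {..<m}. \<bar>trunc_seq k a x\<bar> powr p)"
      unfolding u_def using \<pi> by (simp add: sum.reindex inj_on_subset[of _ UNIV])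
    also have "\<dots> = (\<Sum>x\<in>?J. \<bar>a x\<bar> powr p)"
      by (simp add: trunc_seq_def sum.inter_restrict if_distrib[of "\<lambda>y. \<bar>y\<bar> powr p"] cong: if_cong)
    also have "\<dots> \<le> (\<Sum>l<min m k. \<bar>a (sigma_seq a l)\<bar> powr p)"
    proof (rule sum_powr_le_sum_sigma_seq[OF a p])
      have "card ?J \<le> card (\<pi> ` {..<m})" "card ?J \<le> card {..<k}"
        by (intro card_mono; auto)+
      then show "card ?J \<le> min m k"
        using card_image_le[of "{..<m}" \<pi>] by simp
    qed simp
    finally show ?thesis
      by (simp add: sum_v)
  qed
  have "(\<Sum>i<n. u i * w i) \<le> (\<Sum>i<n. v i * w i)"
    by (rule sum_mult_decseq_le_by_partial_sums[OF w partial])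
  also have "\<dots> = (\<Sum>i\<in>{..<n} \<inter> {..<k}. \<bar>a (sigma_seq a i)\<bar> powr p * w i)"
    by (simp add: v_def sum.inter_restrict if_distrib[of "\<lambda>x. x * _"] cong: if_cong)
  also have "\<dots> \<le> (\<Sum>m<k. \<bar>a (sigma_seq a m)\<bar> powr p * w m)"
    using w(2) by (intro sum_mono2) auto
  finally show ?thesis
    by (simp add: u_def)
qed

lemma perm_sum_sup_trunc_seq_le_sum_sigma_seq:
  assumes a: "finite_superlevels a" and p: "0 \<le> p" and w: "decseq w" "\<And>i. 0 \<le> w i"
  shows "perm_sum_sup p w (trunc_seq k a) \<le> (\<Sum>m<k. \<bar>a (sigma_seq a m)\<bar> powr p * w m)"
  unfolding perm_sum_sup_def
proof (rule cSUP_least)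
  show "{\<sigma>. bij \<sigma>} \<noteq> ({} :: (nat \<Rightarrow> nat) set)"
    using bij_id by blast
  fix \<sigma> :: "nat \<Rightarrow> nat" assume "\<sigma> \<in> {\<sigma>. bij \<sigma>}"
  then have partial: "(\<Sum>i<n. \<bar>trunc_seq k a (\<sigma> i)\<bar> powr p * w i)
      \<le> (\<Sum>m<k. \<bar>a (sigma_seq a m)\<bar> powr p * w m)" for n
    using sum_trunc_seq_perm_le_sum_sigma_seq[OF a p w] by (simp add: bij_is_inj)
  have "summable (\<lambda>i. \<bar>trunc_seq k a (\<sigma> i)\<bar> powr p * w i)"
    using w(2) partial by (intro summableI_nonneg_bounded) auto
  then show "perm_sum p w (trunc_seq k a) \<sigma> \<le> (\<Sum>m<k. \<bar>a (sigma_seq a m)\<bar> powr p * w m)"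
    unfolding perm_sum_def using partial by (rule suminf_le_const)
qed

lemma sigma_seq_tail_le_perm_sum_sup_diff:
  assumes w: "weight_seq w" and p: "0 \<le> p" and a: "a \<in> Lpw p w" and "k \<le> i"
  shows "summable (\<lambda>j. \<bar>a (sigma_seq a (j + i))\<bar> powr p * w (j + i))"
    and "(\<Sum>j. \<bar>a (sigma_seq a (j + i))\<bar> powr p * w (j + i))
      \<le> perm_sum_sup p w a - perm_sum_sup p w (trunc_seq k a)"
proof -
  define g where "g j = \<bar>a (sigma_seq a j)\<bar> powr p * w j" for j
  have w0: "\<And>j. 0 \<le> w j" and "decseq w"
    using w by (simp_all add: weight_seq_nonneg weight_seq_def)
  have "summable g" "suminf g \<le> perm_sum_sup p w a"
    unfolding g_def using sigma_seq_sum_le_perm_sum_sup[OF w p a] by auto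
  then show "summable (\<lambda>j. \<bar>a (sigma_seq a (j + i))\<bar> powr p * w (j + i))"
    using summable_ignore_initial_segment[of g i] by (simp add: g_def)
  have "perm_sum_sup p w (trunc_seq k a) \<le> (\<Sum>j<k. g j)"
    unfolding g_def
    by (rule perm_sum_sup_trunc_seq_le_sum_sigma_seq[OF Lpw_finite_superlevels[OF w p a] p \<open>decseq w\<close> w0])
  also have "\<dots> \<le> (\<Sum>j<i. g j)"
    using \<open>k \<le> i\<close> w0 by (intro sum_mono2) (auto simp: g_def)
  finally have "(\<Sum>j. g (j + i)) \<le> perm_sum_sup p w a - perm_sum_sup p w (trunc_seq k a)"
    using suminf_minus_initial_segment[OF \<open>summable g\<close>, of i] \<open>suminf g \<le> _\<close> by simp
  then show "(\<Sum>j. \<bar>a (sigma_seq a (j + i))\<bar> powr p * w (j + i))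
      \<le> perm_sum_sup p w a - perm_sum_sup p w (trunc_seq k a)"
    by (simp add: g_def)
qed

lemma powr_diff_less_uniformly:
  fixes p \<epsilon> M :: real
  assumes "0 < p" "0 < \<epsilon>"
  obtains \<delta> where "0 < \<delta>"
    "\<And>s t. 0 \<le> t \<Longrightarrow> t \<le> s \<Longrightarrow> s \<le> M \<Longrightarrow> s - t < \<delta> \<Longrightarrow> s powr p - t powr p < \<epsilon>"
proof -
  have "continuous_on {0..M} (\<lambda>t. t powr p)"
    using assms(1) by (intro continuous_on_powr') (auto intro: continuous_intros)
  then have "uniformly_continuous_on {0..M} (\<lambda>t. t powr p)"
    by (intro compact_uniformly_continuous) auto
  then obtain \<delta> where "0 < \<delta>" and \<delta>:
    "\<And>s t. s \<in> {0..M} \<Longrightarrow> t \<in> {0..M} \<Longrightarrow> dist s t < \<delta> \<Longrightarrow> dist (s powr p) (t powr p) < \<epsilon>"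
    using assms(2) unfolding uniformly_continuous_on_def by metis
  show ?thesis
  proof (rule that[OF \<open>0 < \<delta>\<close>])
    fix s t :: real assume "0 \<le> t" "t \<le> s" "s \<le> M" "s - t < \<delta>"
    then have "dist (s powr p) (t powr p) < \<epsilon>"
      by (intro \<delta>) (auto simp: dist_real_def)
    then show "s powr p - t powr p < \<epsilon>"
      by (simp add: dist_real_def)
  qed
qed

lemma equinormed_perm_sum_sup:
  assumes p: "0 < p" and w: "\<And>i. 0 \<le> w i" and A: "A \<subseteq> Lpw p w"
    and bdd: "\<exists>M. \<forall>a\<in>A. pw_norm p w a \<le> M" and "equinormed p w A" and "0 < \<epsilon>"
  obtains k where "\<And>a. a \<in> A \<Longrightarrow> perm_sum_sup p w a < perm_sum_sup p w (trunc_seq k a) + \<epsilon>"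
proof -
  obtain M where M: "\<And>a. a \<in> A \<Longrightarrow> pw_norm p w a \<le> M"
    using bdd by blast
  obtain \<delta> where "0 < \<delta>"
    and \<delta>: "\<And>s t. 0 \<le> t \<Longrightarrow> t \<le> s \<Longrightarrow> s \<le> M \<Longrightarrow> s - t < \<delta> \<Longrightarrow> s powr p - t powr p < \<epsilon>"
    using powr_diff_less_uniformly[OF p \<open>0 < \<epsilon>\<close>] by blast
  obtain k where k: "\<And>a. a \<in> A \<Longrightarrow> pw_norm p w a \<le> pw_norm_i p w k a + \<delta> / 2"
    using \<open>equinormed p w A\<close> \<open>0 < \<delta>\<close> unfolding equinormed_def by (meson half_gt_zero)
  show ?thesis
  proof (rule that)
    fix a assume "a \<in> A"
    then have a: "a \<in> Lpw p w" using A by blast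
    define x y where "x = perm_sum_sup p w a" and "y = perm_sum_sup p w (trunc_seq k a)"
    have "0 \<le> y" "y \<le> x"
      unfolding x_def y_def using perm_sum_sup_nonneg[OF trunc_seq_in_Lpw[OF a w] w]
        perm_sum_sup_trunc_seq_le[OF a w] by auto
    have "(x powr (1 / p)) powr p - (y powr (1 / p)) powr p < \<epsilon>"
    proof (rule \<delta>)
      show "y powr (1 / p) \<le> x powr (1 / p)"
        using \<open>0 \<le> y\<close> \<open>y \<le> x\<close> p by (intro powr_mono2) auto
      show "x powr (1 / p) \<le> M"
        using M[OF \<open>a \<in> A\<close>] by (simp add: x_def pw_norm_eq_perm_sum_sup)
      show "x powr (1 / p) - y powr (1 / p) < \<delta>"
        using k[OF \<open>a \<in> A\<close>] \<open>0 < \<delta>\<close>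
        by (simp add: x_def y_def pw_norm_i_def pw_norm_eq_perm_sum_sup)
    qed simp
    then show "x < y + \<epsilon>"
      using \<open>0 \<le> y\<close> \<open>y \<le> x\<close> p by (simp add: powr_powr)
  qed
qed

theorem mainTheorem12:
  fixes p :: real and w :: "nat \<Rightarrow> real" and A :: "(nat \<Rightarrow> real) set"
  assumes "1 \<le> p"
    and "weight_seq w"
    and "A \<subseteq> Lpw p w"
    and "\<exists>M. \<forall>a\<in>A. pw_norm p w a \<le> M"
    and "equinormed p w A"
  shows "\<forall>\<epsilon>>0. \<exists>N. \<forall>a\<in>A. \<forall>i\<ge>N.
           summable (\<lambda>j. \<bar>a (sigma_seq a (j + i))\<bar> powr p * w (j + i)) \<and>
           (\<Sum>j. \<bar>a (sigma_seq a (j + i))\<bar> powr p * w (j + i)) < \<epsilon>"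
proof (intro allI impI)
  fix \<epsilon> :: real assume "0 < \<epsilon>"
  have p: "0 < p" using assms(1) by simp
  have w0: "\<And>i. 0 \<le> w i"
    using assms(2) by (rule weight_seq_nonneg)
  obtain k where k: "\<And>a. a \<in> A \<Longrightarrow> perm_sum_sup p w a < perm_sum_sup p w (trunc_seq k a) + \<epsilon>"
    using equinormed_perm_sum_sup[OF p w0 assms(3-5) \<open>0 < \<epsilon>\<close>] by blast
  have "summable (\<lambda>j. \<bar>a (sigma_seq a (j + i))\<bar> powr p * w (j + i)) \<and>
      (\<Sum>j. \<bar>a (sigma_seq a (j + i))\<bar> powr p * w (j + i)) < \<epsilon>" if "a \<in> A" "k \<le> i" for a i
    using sigma_seq_tail_le_perm_sum_sup_diff[OF assms(2) less_imp_le[OF p] _ \<open>k \<le> i\<close>] k[OF \<open>a \<in> A\<close>]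
      \<open>a \<in> A\<close> assms(3) by fastforce
  then show "\<exists>N. \<forall>a\<in>A. \<forall>i\<ge>N.
      summable (\<lambda>j. \<bar>a (sigma_seq a (j + i))\<bar> powr p * w (j + i)) \<and>
      (\<Sum>j. \<bar>a (sigma_seq a (j + i))\<bar> powr p * w (j + i)) < \<epsilon>"
    by blast
qed

end
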